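(* There exists a sequence $S\in\{0,1\}^\omega$ such that for all $0<\alpha<1$, FS-depth$(S)\ge 1-\alpha$ and PD-depth$(S)<\alpha$.
   Context: $S\upharpoonright n$ is the length-$n$ prefix of $S$. A finite-state transducer (FST) is $T=(Q,q_0,\delta,\nu)$ with finite state set $Q$, start state $q_0$, $\delta:Q\times\{0,1\}\to Q$, $\nu:Q\times\{0,1\}\to\{0,1\}^*$; $T(\lambda)=\lambda$, $T(xb)=T(x)\nu(\hat\delta(x),b)$. FSTs are described by the following fixed binary representation $\sigma$. For $n\ge1$, $\mathrm{bin}(n)$ is the binary representation of $n$ and $\mathrm{string}(n)$ is $\mathrm{bin}(n)$ with its leading 1 removed. For $x=x_1\cdots x_l$, $x^\dagger=x_10x_20\cdots x_{l-1}0x_l1$, $x^\diamond=\overline{(1x)^\dagger}$ (bitwise complement), and $d(x)=x_1x_1\cdots x_lx_l$. For an FST with states $q_1,\dots,q_m$, write for $1\le i\le m$, $b\in\{0,1\}$, $t=2i-1+b$: $(\delta(q_i,b),\nu(q_i,b))=(q_{1+(n_t \bmod m)},\mathrm{string}(n'_t))$; its transition table is encoded as $\pi=\mathrm{bin}(n_1)^\ddagger\mathrm{string}(n'_1)^\diamond\cdots\mathrm{bin}(n_{2m})^\ddagger\mathrm{string}(n'_{2m})^\diamond$, where $\mathrm{bin}(n_t)^\ddagger$ is empty if the corresponding transition is a self-loop and $\mathrm{bin}(n_t)^\dagger$ otherwise. The string $d(\mathrm{bin}(i))01\pi$ describes that FST with start state $q_i$. $|T|$ is the length of the shortest description of $T$,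 $\mathrm{FST}^{\le k}=\{T:|T|\le k\}$, and $D^k(x)=\min\{|y|: T\in\mathrm{FST}^{\le k},\,T(y)=x\}$ ($\infty$ if no such $y$). FS-depth$(S)\ge\alpha$ means: for every $k\in\mathbb{N}$ there is $k'\in\mathbb{N}$ such that $D^k(S\upharpoonright n)-D^{k'}(S\upharpoonright n)\ge\alpha n$ for infinitely many $n$. A pushdown compressor (PDC) is $C=(Q,\Gamma,\delta,\nu,q_0,z_0,c)$ with finite state set, stack alphabet $\Gamma=\{0,1,z_0\}$ ($z_0$ bottom-of-stack, never removed), partial transition function $\delta: Q\times(\{0,1\}\cup\{\lambda\})\times\Gamma\to Q\times\Gamma^*$ (top stack symbol replaced by the given string), output function $\nu$ on the same domain into $\{0,1\}^*$, and $c$ bounding consecutive $\lambda$-transitions (reading no input, popping top symbol, outputting nothing); for each $q,a$ either $\delta(q,\lambda,a)$ or both $\delta(q,b,a)$ are undefined. $C(w)$ is the output on $w$ and $\delta_Q(w)$ the final state; $C$ is an ILPDC if $w\mapsto(C(w),\delta_Q(w))$ is injective. ILUPDCs are the same with stack alphabet $\{0,z_0\}$. PD-depth$(S)\ge\alpha$ means: for every ILUPDC $C$ there is an ILPDC $C'$ with $|C(S\upharpoonright n)|-|C'(S\upharpoonright n)|\ge\alpha n$ for all but finitely many $n$; PD-depth$(S)<\alpha$ means this fails. *)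

theory Defs
  imports Complex_Main "HOL-Library.Extended_Real"
begin

text \<open>Bits: False = 0, True = 1.  A sequence S in {0,1}^omega is a function nat => bool.\<close>

definition prefix_of :: "(nat \<Rightarrow> bool) \<Rightarrow> nat \<Rightarrow> bool list" where
  "prefix_of S n = map S [0..<n]"

fun bin :: "nat \<Rightarrow> bool list" where
  "bin n = (if n \<le> 1 then [True] else bin (n div 2) @ [odd n])"

definition bstring :: "nat \<Rightarrow> bool list" where
  "bstring n = tl (bin n)"

fun dagger :: "bool list \<Rightarrow> bool list" where
  "dagger [] = []"
| "dagger [x] = [x, True]"
| "dagger (x # xs) = x # False # dagger xs"

definition diamond :: "bool list \<Rightarrow> bool list" where
  "diamond x = map Not (dagger (True # x))"

definition dbl :: "bool list \<Rightarrow> bool list" where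
  "dbl x = concat (map (\<lambda>b. [b, b]) x)"

fun fst_out :: "(nat \<Rightarrow> bool \<Rightarrow> nat) \<Rightarrow> (nat \<Rightarrow> bool \<Rightarrow> bool list) \<Rightarrow> nat \<Rightarrow> bool list \<Rightarrow> bool list" where
  "fst_out delta nu q [] = []"
| "fst_out delta nu q (b # y) = nu q b @ fst_out delta nu (delta q b) y"

text \<open>The FST with states q_1..q_m (represented by 1..m), where for t = 2j-1+b
  we have delta(q_j,b) = q_{1 + (N t mod m)} and nu(q_j,b) = string(N' t).\<close>
definition fst_delta :: "nat \<Rightarrow> (nat \<Rightarrow> nat) \<Rightarrow> nat \<Rightarrow> bool \<Rightarrow> nat" where
  "fst_delta m N q b = 1 + N (2 * q - 1 + (if b then 1 else 0)) mod m"

definition fst_nu :: "(nat \<Rightarrow> nat) \<Rightarrow> nat \<Rightarrow> bool \<Rightarrow> bool list" where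
  "fst_nu N' q b = bstring (N' (2 * q - 1 + (if b then 1 else 0)))"

definition fst_fun :: "nat \<Rightarrow> nat \<Rightarrow> (nat \<Rightarrow> nat) \<Rightarrow> (nat \<Rightarrow> nat) \<Rightarrow> bool list \<Rightarrow> bool list" where
  "fst_fun m i N N' y = fst_out (fst_delta m N) (fst_nu N') i y"

text \<open>The transition table encoding pi; t ranges over 1..2m, the source state of
  transition t is q_{(t+1) div 2}; bin(N t) is omitted for self-loops.\<close>
definition fst_table :: "nat \<Rightarrow> (nat \<Rightarrow> nat) \<Rightarrow> (nat \<Rightarrow> nat) \<Rightarrow> bool list" where
  "fst_table m N N' = concat (map (\<lambda>t.
      (if 1 + N t mod m = (t + 1) div 2 then [] else dagger (bin (N t)))
      @ diamond (bstring (N' t))) [1..<2 * m + 1])"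

definition describes :: "bool list \<Rightarrow> nat \<Rightarrow> nat \<Rightarrow> (nat \<Rightarrow> nat) \<Rightarrow> (nat \<Rightarrow> nat) \<Rightarrow> bool" where
  "describes p m i N N' \<longleftrightarrow>
     1 \<le> m \<and> 1 \<le> i \<and> i \<le> m \<and>
     (\<forall>t\<in>{1..2 * m}. 1 \<le> N t \<and> 1 \<le> N' t) \<and>
     p = dbl (bin i) @ [False, True] @ fst_table m N N'"

text \<open>D^k(x): minimal length of an input y such that some FST with a description
  of length at most k maps y to x (infinity if there is none).\<close>
definition Dk :: "nat \<Rightarrow> bool list \<Rightarrow> ereal" where
  "Dk k x = (INF y \<in> {y. \<exists>p m i N N'. length p \<le> k \<and> describes p m i N N'
                              \<and> fst_fun m i N N' y = x}. ereal (real (length y)))"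

definition FS_depth_ge :: "(nat \<Rightarrow> bool) \<Rightarrow> real \<Rightarrow> bool" where
  "FS_depth_ge S \<alpha> \<longleftrightarrow>
     (\<forall>k. \<exists>k'. \<exists>\<^sub>\<infinity> n. Dk k (prefix_of S n) \<ge> Dk k' (prefix_of S n) + ereal (\<alpha> * real n))"

text \<open>Stack alphabet {0, 1, z0}; the top of the stack is the head of the list.
  Input symbol None stands for lambda.\<close>
datatype gamma = G0 | G1 | Z0

record pdc =
  pQ :: "nat set"
  pdelta :: "nat \<Rightarrow> bool option \<Rightarrow> gamma \<Rightarrow> (nat \<times> gamma list) option"
  pnu :: "nat \<Rightarrow> bool option \<Rightarrow> gamma \<Rightarrow> bool list"
  pq0 :: nat
  pc :: nat

type_synonym config = "nat \<times> gamma list"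

definition lstep :: "pdc \<Rightarrow> config \<Rightarrow> config option" where
  "lstep C cfg = (case snd cfg of [] \<Rightarrow> None
     | a # s \<Rightarrow> (case pdelta C (fst cfg) None a of None \<Rightarrow> None
                 | Some (q', u) \<Rightarrow> Some (q', u @ s)))"

definition istep :: "pdc \<Rightarrow> bool \<Rightarrow> config \<Rightarrow> (config \<times> bool list) option" where
  "istep C b cfg = (case snd cfg of [] \<Rightarrow> None
     | a # s \<Rightarrow> (case pdelta C (fst cfg) (Some b) a of None \<Rightarrow> None
                 | Some (q', u) \<Rightarrow> Some ((q', u @ s), pnu C (fst cfg) (Some b) a)))"

fun lclose :: "pdc \<Rightarrow> nat \<Rightarrow> config \<Rightarrow> config" where
  "lclose C 0 cfg = cfg"
| "lclose C (Suc k) cfg = (case lstep C cfg of None \<Rightarrow> cfg | Some cfg' \<Rightarrow> lclose C k cfg')"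

fun runfrom :: "pdc \<Rightarrow> config \<Rightarrow> bool list \<Rightarrow> (config \<times> bool list) option" where
  "runfrom C cfg [] = Some (cfg, [])"
| "runfrom C cfg (b # w) = (case istep C b cfg of None \<Rightarrow> None
     | Some (cfg', out) \<Rightarrow> (case runfrom C (lclose C (pc C) cfg') w of None \<Rightarrow> None
          | Some (cf, out') \<Rightarrow> Some (cf, out @ out')))"

definition pd_run :: "pdc \<Rightarrow> bool list \<Rightarrow> (config \<times> bool list) option" where
  "pd_run C w = runfrom C (lclose C (pc C) (pq0 C, [Z0])) w"

definition pd_out :: "pdc \<Rightarrow> bool list \<Rightarrow> bool list" where
  "pd_out C w = snd (the (pd_run C w))"

definition pd_state :: "pdc \<Rightarrow> bool list \<Rightarrow> nat" where
  "pd_state C w = fst (fst (the (pd_run C w)))"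

inductive_set pre_reach :: "pdc \<Rightarrow> config set" for C where
  init: "(pq0 C, [Z0]) \<in> pre_reach C"
| step: "cfg \<in> pre_reach C \<Longrightarrow> istep C b (lclose C (pc C) cfg) = Some (cfg', out)
          \<Longrightarrow> cfg' \<in> pre_reach C"

definition is_pdc :: "pdc \<Rightarrow> bool" where
  "is_pdc C \<longleftrightarrow>
     finite (pQ C) \<and> pq0 C \<in> pQ C \<and>
     (\<forall>q x a. q \<notin> pQ C \<longrightarrow> pdelta C q x a = None) \<and>
     (\<forall>q x a q' u. pdelta C q x a = Some (q', u) \<longrightarrow> q' \<in> pQ C) \<and>
     \<comment> \<open>z0 stays at the bottom and is never removed\<close>
     (\<forall>q x q' u. pdelta C q x Z0 = Some (q', u) \<longrightarrow>
          u \<noteq> [] \<and> last u = Z0 \<and> Z0 \<notin> set (butlast u)) \<and>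
     (\<forall>q x a q' u. a \<noteq> Z0 \<longrightarrow> pdelta C q x a = Some (q', u) \<longrightarrow> Z0 \<notin> set u) \<and>
     \<comment> \<open>lambda-transitions read nothing, pop the top symbol, output nothing\<close>
     (\<forall>q a q' u. pdelta C q None a = Some (q', u) \<longrightarrow> a \<noteq> Z0 \<and> u = [] \<and> pnu C q None a = []) \<and>
     \<comment> \<open>determinism\<close>
     (\<forall>q a b. pdelta C q None a \<noteq> None \<longrightarrow> pdelta C q (Some b) a = None) \<and>
     \<comment> \<open>c bounds the number of consecutive lambda-transitions\<close>
     (\<forall>cfg \<in> pre_reach C. lstep C (lclose C (pc C) cfg) = None) \<and>
     \<comment> \<open>the output C(w) is defined for every input w\<close>
     (\<forall>w. pd_run C w \<noteq> None)"

definition is_ILPDC :: "pdc \<Rightarrow> bool" where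
  "is_ILPDC C \<longleftrightarrow> is_pdc C \<and> inj (\<lambda>w. (pd_out C w, pd_state C w))"

text \<open>Unary: stack alphabet {0, z0}.\<close>
definition is_ILUPDC :: "pdc \<Rightarrow> bool" where
  "is_ILUPDC C \<longleftrightarrow> is_ILPDC C \<and> (\<forall>q x a q' u. pdelta C q x a = Some (q', u) \<longrightarrow> G1 \<notin> set u)"

definition PD_depth_ge :: "(nat \<Rightarrow> bool) \<Rightarrow> real \<Rightarrow> bool" where
  "PD_depth_ge S \<alpha> \<longleftrightarrow>
     (\<forall>C. is_ILUPDC C \<longrightarrow> (\<exists>C'. is_ILPDC C' \<and>
        (\<forall>\<^sub>F n in sequentially. real (length (pd_out C (prefix_of S n)))
             - real (length (pd_out C' (prefix_of S n))) \<ge> \<alpha> * real n)))"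

end

theory Submission
  imports Defs "HOL-Library.Sublist" "HOL-Library.Countable" "HOL-Library.FuncSet"
begin

text \<open>
  The sequence is built in stages. Stage \<open>s + 1\<close> first appends a block that none of the first
  \<open>s + 1\<close> ILPDCs can compress below the ratio \<open>s / (s + 1)\<close>: such a block exists by counting,
  because an ILPDC is injective on (output, final state) and has finitely many states. Since the
  ILPDCs are countable and the identity is an ILUPDC, no ILPDC beats the identity by \<open>\<alpha> n\<close> on all
  long prefixes, so the PD-depth is below every \<open>\<alpha> > 0\<close>.

  The stage then appends \<open>3 |v| + 1\<close> copies of a word \<open>u\<close>, \<open>v\<close> being everything before, where \<open>u\<close>
  is hard for all transducers described in at most \<open>L\<close> bits and every level \<open>L\<close> recurs at
  infinitely many stages. A fixed three-state transducer outputs \<open>v u\<^sup>r\<close> from \<open>2 |v| + 1 + r\<close>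
  bits, whereas the transducers of level \<open>L\<close> need almost \<open>|u|\<close> bits for every copy of \<open>u\<close>; this
  makes the FS-depth at least \<open>1 - \<alpha>\<close>.
\<close>

section \<open>Finite-state transducers\<close>

fun fst_state :: "(nat \<Rightarrow> bool \<Rightarrow> nat) \<Rightarrow> nat \<Rightarrow> bool list \<Rightarrow> nat" where
  "fst_state d q [] = q"
| "fst_state d q (b # y) = fst_state d (d q b) y"

lemma fst_out_append:
  "fst_out d n q (y1 @ y2) = fst_out d n q y1 @ fst_out d n (fst_state d q y1) y2"
  by (induction y1 arbitrary: q) auto

lemma fst_state_closed:
  assumes "\<forall>q\<in>Qs. \<forall>b. d q b \<in> Qs" and "q \<in> Qs"
  shows "fst_state d q y \<in> Qs"
  using assms by (induction y arbitrary: q) auto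

lemma fst_out_cong:
  assumes "\<forall>q\<in>Qs. \<forall>b. d q b \<in> Qs \<and> d' q b = d q b \<and> n' q b = n q b" and "q \<in> Qs"
  shows "fst_out d' n' q = fst_out d n q"
proof
  fix y show "fst_out d' n' q y = fst_out d n q y"
    using assms(2) by (induction y arbitrary: q) (simp_all add: assms(1))
qed

lemma fst_out_split:
  assumes steps: "\<forall>q\<in>Qs. \<forall>b. d q b \<in> Qs \<and> length (n q b) \<le> K" and "0 < K"
  shows "q \<in> Qs \<Longrightarrow> L \<le> length (fst_out d n q y) \<Longrightarrow>
    \<exists>y1 y2. y = y1 @ y2 \<and> L \<le> length (fst_out d n q y1) \<and> length (fst_out d n q y1) < L + K"
proof (induction y arbitrary: q L)
  case Nil
  then show ?case using \<open>0 < K\<close> by simp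
next
  case (Cons b y)
  consider "L = 0" | "0 < L" "L \<le> length (n q b)" | "length (n q b) < L" by linarith
  then show ?case
  proof cases
    case 1
    then show ?thesis using \<open>0 < K\<close> by force
  next
    case 2
    moreover have "length (n q b) \<le> K"
      using steps Cons.prems(1) by blast
    ultimately have "b # y = [b] @ y \<and> L \<le> length (fst_out d n q [b]) \<and> length (fst_out d n q [b]) < L + K"
      by simp
    then show ?thesis by blast
  next
    case 3
    then obtain y1 y2 where "y = y1 @ y2" "L - length (n q b) \<le> length (fst_out d n (d q b) y1)"
        "length (fst_out d n (d q b) y1) < L - length (n q b) + K"
      using Cons steps by (metis fst_out.simps(2) length_append diff_le_mono add_diff_cancel_left')
    then have "b # y = (b # y1) @ y2 \<and> L \<le> length (fst_out d n q (b # y1))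
        \<and> length (fst_out d n q (b # y1)) < L + K"
      using 3 by auto
    then show ?thesis by blast
  qed
qed

section \<open>Hard words\<close>

text \<open>The offsets \<open>j < K\<close> absorb the overshoot of a single transducer step, whose output has
  at most \<open>K\<close> bits.\<close>

definition hard_word :: "(bool list \<Rightarrow> bool list) set \<Rightarrow> nat \<Rightarrow> nat \<Rightarrow> bool list \<Rightarrow> bool" where
  "hard_word F K c u \<longleftrightarrow> (\<forall>f\<in>F. \<forall>y j. j < K \<longrightarrow> prefix (drop j u) (f y) \<longrightarrow> c \<le> length y)"

lemma fst_out_repeat_split:
  assumes steps: "\<forall>q\<in>Qs. \<forall>b. d q b \<in> Qs \<and> length (n q b) \<le> K" and "0 < K"
    and hard: "hard_word F K c u" and maps: "\<forall>q\<in>Qs. fst_out d n q \<in> F" and q: "q \<in> Qs"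
  shows "prefix (v @ concat (replicate r u)) (fst_out d n q y) \<Longrightarrow>
    \<exists>y1 y2. y = y1 @ y2 \<and> length v \<le> length (fst_out d n q y1) \<and> r * c \<le> length y2"
proof (induction r arbitrary: v)
  case 0
  then have "length v \<le> length (fst_out d n q y)"
    using prefix_length_le by fastforce
  then show ?case
    by (intro exI[of _ y] exI[of _ "[]"]) simp
next
  case (Suc r)
  then obtain y1 y2 where y: "y = y1 @ y2" and long: "length (v @ u) \<le> length (fst_out d n q y1)"
      and cost2: "r * c \<le> length y2"
    using Suc.IH[of "v @ u"] by auto
  have "prefix (v @ u) (fst_out d n q y)"
    using Suc.prems append_prefixD[of "v @ u" "concat (replicate r u)"] by simp
  moreover have "prefix (fst_out d n q y1) (fst_out d n q y)"
    by (simp add: y fst_out_append)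
  ultimately have "prefix (v @ u) (fst_out d n q y1)"
    using long prefix_length_prefix by blast
  then obtain z where z: "fst_out d n q y1 = v @ u @ z"
    by (auto simp: prefix_def)
  \<comment> \<open>\<open>y11\<close> produces \<open>v\<close> with an overshoot \<open>j < K\<close>, so \<open>y12\<close> produces \<open>drop j u\<close>\<close>
  obtain y11 y12 where y1: "y1 = y11 @ y12" and over: "length v \<le> length (fst_out d n q y11)"
      "length (fst_out d n q y11) < length v + K"
    using fst_out_split[OF steps \<open>0 < K\<close> q, of "length v" y1] long by auto
  define j where "j = length (fst_out d n q y11) - length v"
  define q' where "q' = fst_state d q y11"
  have "fst_out d n q' y12 = drop (length (fst_out d n q y11)) (fst_out d n q y1)"
    by (simp add: y1 fst_out_append q'_def)
  also have "\<dots> = drop j (u @ z)"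
    using z over(1) by (simp add: j_def)
  finally have "prefix (drop j u) (fst_out d n q' y12)"
    by simp
  moreover have "fst_out d n q' \<in> F"
    using maps fst_state_closed steps q unfolding q'_def by blast
  moreover have "j < K"
    using over unfolding j_def by linarith
  ultimately have "c \<le> length y12"
    using hard unfolding hard_word_def by blast
  then have "y = y11 @ (y12 @ y2) \<and> length v \<le> length (fst_out d n q y11)
      \<and> Suc r * c \<le> length (y12 @ y2)"
    using y y1 over(1) cost2 by simp
  then show ?case
    by blast
qed

lemma fst_out_repeat_cost:
  assumes "\<forall>q\<in>Qs. \<forall>b. d q b \<in> Qs \<and> length (n q b) \<le> K" and "0 < K"
    and "hard_word F K c u" and "\<forall>q\<in>Qs. fst_out d n q \<in> F" and "q \<in> Qs"
    and "prefix (v @ concat (replicate r u)) (fst_out d n q y)"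
  shows "r * c \<le> length y"
  using fst_out_repeat_split[OF assms] by auto

lemma card_bool_lists_shorter: "card {xs :: bool list. length xs < n} < 2 ^ n"
proof (induction n)
  case (Suc n)
  have "{xs :: bool list. length xs < Suc n} = {xs. length xs < n} \<union> {xs. length xs = n}"
    by auto
  then have "card {xs :: bool list. length xs < Suc n}
      \<le> card {xs :: bool list. length xs < n} + card {xs :: bool list. length xs = n}"
    by (simp add: card_Un_le)
  then show ?case
    using Suc card_lists_length_eq[of "UNIV :: bool set" n] by (simp add: card_UNIV_bool)
qed simp

lemma finite_bool_lists_shorter: "finite {xs :: bool list. length xs < n}"
  using finite_lists_length_le[of "UNIV :: bool set" n] by (rule finite_subset[rotated]) auto

lemma hard_word_exists:
  assumes "finite F"
  shows "\<exists>u. length u = card F * K * 2 ^ K + c \<and> hard_word F K c u"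
proof (rule ccontr)
  assume none: "\<not> ?thesis"
  define l where "l = card F * K * 2 ^ K + c"
  define D where "D = F \<times> {y :: bool list. length y < c} \<times> {..<K} \<times> {a :: bool list. length a < K}"
  \<comment> \<open>a word that is not hard is determined by a tuple in \<open>D\<close>, and there are fewer than \<open>2 ^ l\<close> of them\<close>
  define \<Phi> where "\<Phi> = (\<lambda>(f :: bool list \<Rightarrow> bool list, y :: bool list, j, a :: bool list). a @ take (l - j) (f y))"
  have "{u. length u = l} \<subseteq> \<Phi> ` D"
  proof
    fix u :: "bool list"
    assume "u \<in> {u. length u = l}"
    then have l: "length u = l" and "\<not> hard_word F K c u"
      using none l_def by auto
    then obtain f y j where f: "f \<in> F" "j < K" "prefix (drop j u) (f y)" "length y < c"
      unfolding hard_word_def by force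
    then obtain z where "f y = drop j u @ z"
      by (auto simp: prefix_def)
    then have "u = \<Phi> (f, y, j, take j u)"
      using l by (simp add: \<Phi>_def)
    moreover have "(f, y, j, take j u) \<in> D"
      using f by (simp add: D_def)
    ultimately show "u \<in> \<Phi> ` D" by blast
  qed
  moreover have "finite D"
    using assms finite_bool_lists_shorter by (simp add: D_def)
  ultimately have "card {u :: bool list. length u = l} \<le> card D"
    using card_image_le card_mono finite_imageI order_trans by metis
  also have "\<dots> = card F * card {y :: bool list. length y < c} * K * card {a :: bool list. length a < K}"
    by (simp add: D_def card_cartesian_product)
  also have "\<dots> \<le> card F * 2 ^ c * K * 2 ^ K"
    using card_bool_lists_shorter[of c] card_bool_lists_shorter[of K]
    by (intro mult_le_mono) auto
  also have "\<dots> < 2 ^ (card F * K * 2 ^ K) * 2 ^ c"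
    using less_exp[of "card F * K * 2 ^ K"] by (simp add: ac_simps)
  finally show False
    using card_lists_length_eq[of "UNIV :: bool set" l]
    by (simp add: card_UNIV_bool l_def power_add)
qed

lemma inputs_with_short_output:
  fixes g :: "'a \<Rightarrow> bool list \<times> 'q"
  assumes inj: "inj g" and states: "\<And>x. snd (g x) \<in> P" and "finite P"
  shows "finite {x. length (fst (g x)) < b}" and "card {x. length (fst (g x)) < b} \<le> 2 ^ b * card P"
proof -
  let ?B = "{ob :: bool list. length ob < b} \<times> P"
  have sub: "g ` {x. length (fst (g x)) < b} \<subseteq> ?B"
    by (rule image_subsetI) (simp add: mem_Times_iff states)
  have "finite ?B"
    using \<open>finite P\<close> finite_bool_lists_shorter by simp
  then show "finite {x. length (fst (g x)) < b}"
    using sub inj by (meson finite_imageD finite_subset inj_on_subset subset_UNIV)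
  have "card {x. length (fst (g x)) < b} \<le> card ?B"
    using sub inj \<open>finite ?B\<close> by (intro card_inj_on_le) (auto intro: inj_on_subset)
  also have "\<dots> \<le> 2 ^ b * card P"
    using card_bool_lists_shorter[of b] by (simp add: card_cartesian_product)
  finally show "card {x. length (fst (g x)) < b} \<le> 2 ^ b * card P" .
qed

lemma div_padding_bound:
  fixes s p t :: nat
  shows "s * (p + (s + 1) * (p + t)) div (s + 1) + t \<le> (s + 1) * (p + t)"
proof -
  define m where "m = (s + 1) * (p + t)"
  have "s * (p + m) div (s + 1) * (s + 1) \<le> s * (p + m)"
    by (rule div_times_less_eq_dividend)
  moreover have "(s + 1) * m = s * m + (s + 1) * p + (s + 1) * t"
    unfolding m_def by (simp add: algebra_simps)
  moreover have "s * p \<le> (s + 1) * p"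
    by simp
  ultimately have "(s + 1) * (s * (p + m) div (s + 1) + t) \<le> (s + 1) * m"
    by (simp add: algebra_simps)
  then show ?thesis
    using mult_le_cancel1[of "s + 1" _ m] unfolding m_def by (simp del: mult_Suc mult_Suc_right)
qed

lemma exists_long_outputs:
  fixes f :: "nat \<Rightarrow> bool list \<Rightarrow> bool list \<times> 'q"
  assumes inj: "\<And>i. inj (f i)" and fin: "\<And>i. finite (snd ` range (f i))"
  shows "\<exists>R. \<forall>i\<le>s. s * length (v @ R) < (s + 1) * length (fst (f i (v @ R)))"
proof -
  define Q where "Q = (\<Sum>i\<le>s. card (snd ` range (f i)))"
  define p where "p = length v"
  define m where "m = (s + 1) * (p + 2 * Q + 1)"
  have "\<exists>R. length R = m \<and> (\<forall>i\<le>s. s * (p + m) < (s + 1) * length (fst (f i (v @ R))))"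
  proof (rule ccontr)
    assume none: "\<not> ?thesis"
    define b where "b = s * (p + m) div (s + 1)"
    define short where "short i = {R. length (fst (f i (v @ R))) < b + 1}" for i
    have inj_v: "inj (\<lambda>R. f i (v @ R))" for i
      using inj[of i] by (auto simp: inj_def)
    have short: "finite (short i)" "card (short i) \<le> 2 ^ (b + 1) * card (snd ` range (f i))" for i
      unfolding short_def using inputs_with_short_output[OF inj_v, of i "snd ` range (f i)" "b + 1"] fin[of i]
      by auto
    have cover: "{R :: bool list. length R = m} \<subseteq> (\<Union>i\<le>s. short i)"
    proof
      fix R :: "bool list"
      assume "R \<in> {R. length R = m}"
      then obtain i where "i \<le> s" and "\<not> s * (p + m) < (s + 1) * length (fst (f i (v @ R)))"
        using none by blast
      then have "length (fst (f i (v @ R))) * (s + 1) \<le> s * (p + m)"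
        by (simp add: mult.commute)
      then have "length (fst (f i (v @ R))) \<le> b"
        unfolding b_def by (simp add: less_eq_div_iff_mult_less_eq)
      then have "R \<in> short i"
        by (simp add: short_def)
      then show "R \<in> (\<Union>i\<le>s. short i)"
        using \<open>i \<le> s\<close> by blast
    qed
    have "2 ^ m = card {R :: bool list. length R = m}"
      using card_lists_length_eq[of "UNIV :: bool set" m] by (simp add: card_UNIV_bool)
    also have "\<dots> \<le> card (\<Union>i\<le>s. short i)"
      using cover short(1) by (intro card_mono) auto
    also have "\<dots> \<le> (\<Sum>i\<le>s. card (short i))"
      by (rule card_UN_le) simp
    also have "\<dots> \<le> (\<Sum>i\<le>s. 2 ^ (b + 1) * card (snd ` range (f i)))"
      by (rule sum_mono) (rule short(2))
    also have "\<dots> = 2 ^ b * (2 * Q)"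
      unfolding Q_def by (simp add: sum_distrib_left mult.assoc mult.left_commute)
    also have "\<dots> < 2 ^ b * 2 ^ (2 * Q + 1)"
      using less_exp[of "2 * Q + 1"] by simp
    also have "\<dots> = 2 ^ (b + (2 * Q + 1))"
      by (simp add: power_add)
    also have "\<dots> \<le> 2 ^ m"
      using div_padding_bound[of s p "2 * Q + 1"] unfolding b_def m_def
      by (intro power_increasing) (simp_all add: add.assoc)
    finally show False
      by simp
  qed
  then show ?thesis
    by (auto simp: p_def)
qed

section \<open>Descriptions of transducers\<close>

lemma length_dagger: "length (dagger xs) = 2 * length xs"
  by (induction xs rule: dagger.induct) auto

lemma length_diamond: "length (diamond x) = 2 * length x + 2"
  by (simp add: diamond_def length_dagger del: dagger.simps)

lemma describes_size:
  assumes "describes p m i N N'"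
  shows "m \<le> length p" and "\<And>t. t \<in> {1..2 * m} \<Longrightarrow> length (bstring (N' t)) \<le> length p"
proof -
  define entry where "entry = (\<lambda>t. (if 1 + N t mod m = (t + 1) div 2 then [] else dagger (bin (N t)))
      @ diamond (bstring (N' t)))"
  have table: "length (fst_table m N N') \<le> length p"
    using assms by (simp add: describes_def)
  have entries: "fst_table m N N' = concat (map entry [1..<2 * m + 1])"
    unfolding fst_table_def entry_def by (rule refl)
  have "length (concat (map entry [1..<2 * m + 1])) = (\<Sum>t\<leftarrow>[1..<2 * m + 1]. length (entry t))"
    by (simp add: length_concat comp_def)
  also have "\<dots> \<ge> (\<Sum>t\<leftarrow>[1..<2 * m + 1]. 1)"
    by (intro sum_list_mono) (simp add: entry_def length_diamond)
  also have "(\<Sum>t\<leftarrow>[1..<2 * m + 1]. 1) = 2 * m"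
    by (simp add: sum_list_triv del: upt_Suc)
  finally show "m \<le> length p"
    using table entries by simp
  fix t assume "t \<in> {1..2 * m}"
  then have "t \<in> set [1..<2 * m + 1]"
    by auto
  then have "length (entry t) \<le> length (fst_table m N N')"
    unfolding entries length_concat by (intro member_le_sum_list) (auto simp del: upt_Suc)
  then show "length (bstring (N' t)) \<le> length p"
    using table by (simp add: entry_def length_diamond)
qed

lemma describes_steps:
  assumes "describes p m i N N'"
  shows "\<forall>q\<in>{1..m}. \<forall>b. fst_delta m N q b \<in> {1..m} \<and> length (fst_nu N' q b) \<le> length p"
proof (intro ballI allI)
  fix q b
  assume "q \<in> {1..m}"
  then have "2 * q - 1 + (if b then 1 else 0) \<in> {1..2 * m}"
    by auto
  moreover have "0 < m"
    using assms by (simp add: describes_def)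
  ultimately show "fst_delta m N q b \<in> {1..m} \<and> length (fst_nu N' q b) \<le> length p"
    using describes_size(2)[OF assms] by (simp add: fst_delta_def fst_nu_def Suc_le_eq)
qed

definition fst_maps :: "nat \<Rightarrow> (bool list \<Rightarrow> bool list) set" where
  "fst_maps K = {fst_out (fst_delta m N) (fst_nu N') q | p m i N N' q.
      length p \<le> K \<and> describes p m i N N' \<and> q \<in> {1..m}}"

lemma finite_fst_maps: "finite (fst_maps K)"
proof -
  \<comment> \<open>such a map only depends on its start state and on the first \<open>2 K\<close> entries of the table\<close>
  define idx :: "nat \<Rightarrow> bool \<Rightarrow> nat" where "idx q b = 2 * q - 1 + (if b then 1 else 0)" for q b
  define tables where "tables = (\<Pi>\<^sub>E t \<in> {1..2 * K}. {0..<K} \<times> {ys :: bool list. length ys \<le> K})"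
  define run where "run = (\<lambda>(G :: nat \<Rightarrow> nat \<times> bool list, q).
      fst_out (\<lambda>q b. 1 + fst (G (idx q b))) (\<lambda>q b. snd (G (idx q b))) q)"
  have "fst_maps K \<subseteq> run ` (tables \<times> {1..K})"
  proof
    fix f
    assume "f \<in> fst_maps K"
    then obtain p m i N N' q where p: "length p \<le> K" "describes p m i N N'" "q \<in> {1..m}"
      and f: "f = fst_out (fst_delta m N) (fst_nu N') q"
      unfolding fst_maps_def by blast
    have m: "0 < m" "m \<le> K"
      using describes_size(1)[OF p(2)] p(1,2) by (auto simp: describes_def)
    define G where "G = restrict (\<lambda>t. if t \<le> 2 * m then (N t mod m, bstring (N' t)) else (0, [])) {1..2 * K}"
    have "\<forall>q\<in>{1..m}. \<forall>b. fst_delta m N q b \<in> {1..m} \<and> 1 + fst (G (idx q b)) = fst_delta m N q b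
        \<and> snd (G (idx q b)) = fst_nu N' q b"
      using describes_steps[OF p(2)] m by (auto simp: G_def idx_def fst_delta_def fst_nu_def)
    from fst_out_cong[OF this p(3)] have "f = run (G, q)"
      by (simp add: f run_def)
    moreover have "G \<in> tables"
    proof -
      have "N t mod m < K" for t
        using m by (meson mod_less_divisor less_le_trans)
      moreover have "length (bstring (N' t)) \<le> K" if "t \<in> {1..2 * m}" for t
        using describes_size(2)[OF p(2) that] p(1) by linarith
      ultimately show ?thesis
        by (auto simp: G_def tables_def)
    qed
    moreover have "q \<in> {1..K}"
      using p(3) m by auto
    ultimately show "f \<in> run ` (tables \<times> {1..K})"
      by blast
  qed
  moreover have "finite tables"
    unfolding tables_def using finite_lists_length_le[of "UNIV :: bool set" K]
    by (intro finite_PiE) auto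
  ultimately show ?thesis
    by (meson finite_SigmaI finite_atLeastAtMost finite_imageI finite_subset)
qed

lemma Dk_repeat_lower:
  assumes hard: "hard_word (fst_maps K) K c u" and "k \<le> K" and "0 < K"
  shows "ereal (real (r * c)) \<le> Dk k (v @ concat (replicate r u))"
  unfolding Dk_def
proof (rule INF_greatest)
  fix y
  assume "y \<in> {y. \<exists>p m i N N'. length p \<le> k \<and> describes p m i N N'
      \<and> fst_fun m i N N' y = v @ concat (replicate r u)}"
  then obtain p m i N N' where "length p \<le> k" and p: "describes p m i N N'"
    and out: "fst_out (fst_delta m N) (fst_nu N') i y = v @ concat (replicate r u)"
    unfolding fst_fun_def by blast
  then have "length p \<le> K"
    using \<open>k \<le> K\<close> by simp
  have steps: "\<forall>q\<in>{1..m}. \<forall>b. fst_delta m N q b \<in> {1..m} \<and> length (fst_nu N' q b) \<le> K"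
    using describes_steps[OF p] \<open>length p \<le> K\<close> le_trans by blast
  moreover have "\<forall>q\<in>{1..m}. fst_out (fst_delta m N) (fst_nu N') q \<in> fst_maps K"
    using p \<open>length p \<le> K\<close> unfolding fst_maps_def by blast
  moreover have "i \<in> {1..m}"
    using p by (simp add: describes_def)
  moreover have "prefix (v @ concat (replicate r u)) (fst_out (fst_delta m N) (fst_nu N') i y)"
    by (simp add: out)
  ultimately have "r * c \<le> length y"
    using fst_out_repeat_cost[OF steps \<open>0 < K\<close> hard] by blast
  then show "ereal (real (r * c)) \<le> ereal (real (length y))"
    by (simp del: of_nat_mult)
qed

declare bin.simps [simp del]

definition nat_of_bits :: "bool list \<Rightarrow> nat" where
  "nat_of_bits xs = foldl (\<lambda>n b. 2 * n + (if b then 1 else 0)) 1 xs"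

lemma nat_of_bits_snoc: "nat_of_bits (xs @ [b]) = 2 * nat_of_bits xs + (if b then 1 else 0)"
  by (simp add: nat_of_bits_def)

lemma nat_of_bits_pos: "0 < nat_of_bits xs"
  by (induction xs rule: rev_induct) (simp_all add: nat_of_bits_snoc, simp add: nat_of_bits_def)

lemma bin_nat_of_bits: "bin (nat_of_bits xs) = True # xs"
proof (induction xs rule: rev_induct)
  case Nil
  show ?case by (subst bin.simps) (simp add: nat_of_bits_def)
next
  case (snoc b xs)
  have "\<not> nat_of_bits (xs @ [b]) \<le> 1"
    using nat_of_bits_pos[of xs] by (simp add: nat_of_bits_snoc)
  then have "bin (nat_of_bits (xs @ [b])) = bin (nat_of_bits (xs @ [b]) div 2) @ [odd (nat_of_bits (xs @ [b]))]"
    by (subst bin.simps) simp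
  then show ?case
    using snoc by (simp add: nat_of_bits_snoc)
qed

lemma bstring_nat_of_bits [simp]: "bstring (nat_of_bits xs) = xs"
  by (simp add: bstring_def bin_nat_of_bits)

text \<open>State 1 reads a flag bit: after \<open>0\<close> the next bit is copied (state 2), after \<open>1\<close> every
  further bit outputs \<open>u\<close> (state 3).\<close>

definition rep_next :: "nat \<Rightarrow> nat" where
  "rep_next t = (if t = 1 then 1 else if t = 2 then 2 else if t \<in> {3, 4} then 3 else 2)"

definition rep_out :: "bool list \<Rightarrow> nat \<Rightarrow> nat" where
  "rep_out u t = nat_of_bits
     (if t = 3 then [False] else if t = 4 then [True] else if t \<in> {5, 6} then u else [])"

definition rep_desc :: "bool list \<Rightarrow> bool list" where
  "rep_desc u = dbl (bin 1) @ [False, True] @ fst_table 3 rep_next (rep_out u)"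

lemma describes_rep_desc: "describes (rep_desc u) 3 1 rep_next (rep_out u)"
  using nat_of_bits_pos by (auto simp: describes_def rep_desc_def rep_next_def rep_out_def Suc_le_eq)

lemma rep_steps:
  "fst_delta 3 rep_next (Suc 0) b = (if b then 3 else 2)" "fst_nu (rep_out u) (Suc 0) b = []"
  "fst_delta 3 rep_next 2 b = 1" "fst_nu (rep_out u) 2 b = [b]"
  "fst_delta 3 rep_next 3 b = 3" "fst_nu (rep_out u) 3 b = u"
  by (auto simp: fst_delta_def rep_next_def fst_nu_def rep_out_def)

lemma fst_fun_rep:
  "fst_fun 3 1 rep_next (rep_out u) (concat (map (\<lambda>b. [False, b]) v) @ True # replicate r False)
    = v @ concat (replicate r u)"
proof -
  have "fst_out (fst_delta 3 rep_next) (fst_nu (rep_out u)) 3 (replicate r False) = concat (replicate r u)"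
    by (induction r) (simp_all add: rep_steps)
  then show ?thesis
    unfolding fst_fun_def by (induction v) (simp_all add: rep_steps)
qed

lemma Dk_repeat_upper:
  "Dk (length (rep_desc u)) (v @ concat (replicate r u)) \<le> ereal (real (2 * length v + 1 + r))"
proof -
  define y where "y = concat (map (\<lambda>b. [False, b]) v) @ True # replicate r False"
  have "Dk (length (rep_desc u)) (v @ concat (replicate r u)) \<le> ereal (real (length y))"
    unfolding Dk_def y_def using describes_rep_desc fst_fun_rep by (intro INF_lower) blast
  also have "length y = 2 * length v + 1 + r"
    unfolding y_def by (induction v) simp_all
  finally show ?thesis .
qed

section \<open>Pushdown compressors\<close>

lemma lclose_state_closed:
  assumes "\<forall>q x a q' u. pdelta C q x a = Some (q', u) \<longrightarrow> q' \<in> pQ C" and "fst cfg \<in> pQ C"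
  shows "fst (lclose C k cfg) \<in> pQ C"
  using assms(2)
proof (induction k arbitrary: cfg)
  case (Suc k)
  show ?case
  proof (cases "lstep C cfg")
    case (Some cfg')
    then have "fst cfg' \<in> pQ C"
      using assms(1) by (fastforce simp: lstep_def split: list.splits option.splits)
    then show ?thesis
      using Some Suc.IH by simp
  qed (simp add: Suc.prems)
qed simp

lemma runfrom_state_closed:
  assumes "\<forall>q x a q' u. pdelta C q x a = Some (q', u) \<longrightarrow> q' \<in> pQ C"
    and "fst cfg \<in> pQ C" and "runfrom C cfg w = Some (cfg', out)"
  shows "fst cfg' \<in> pQ C"
  using assms(2,3)
proof (induction w arbitrary: cfg out)
  case (Cons b w)
  then obtain cfg1 out1 out2 where step: "istep C b cfg = Some (cfg1, out1)"
    and rest: "runfrom C (lclose C (pc C) cfg1) w = Some (cfg', out2)"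
    by (auto split: option.splits)
  have "fst cfg1 \<in> pQ C"
    using step assms(1) by (fastforce simp: istep_def split: list.splits option.splits)
  then show ?case
    using Cons.IH[OF lclose_state_closed[OF assms(1)] rest] by simp
qed simp

lemma pd_state_in_states:
  assumes "is_pdc C"
  shows "pd_state C w \<in> pQ C"
proof -
  have closed: "\<forall>q x a q' u. pdelta C q x a = Some (q', u) \<longrightarrow> q' \<in> pQ C"
    and "pq0 C \<in> pQ C" and "pd_run C w \<noteq> None"
    using assms by (simp_all add: is_pdc_def)
  then obtain cfg' out where run: "pd_run C w = Some (cfg', out)"
    by auto
  have "fst (lclose C (pc C) (pq0 C, [Z0])) \<in> pQ C"
    using lclose_state_closed[OF closed] \<open>pq0 C \<in> pQ C\<close> by simp
  from runfrom_state_closed[OF closed this] run show ?thesis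
    by (simp add: pd_state_def pd_run_def)
qed

definition pd_behaviour :: "pdc \<Rightarrow> bool list \<Rightarrow> bool list \<times> nat" where
  "pd_behaviour C w = (pd_out C w, pd_state C w)"

text \<open>Outputs of undefined transitions do not influence the behaviour; erasing them makes a
  compressor determined by finitely many data, which gives countability.\<close>

definition pdc_trim :: "pdc \<Rightarrow> pdc" where
  "pdc_trim C = C\<lparr>pnu := (\<lambda>q x a. if pdelta C q x a = None then [] else pnu C q x a)\<rparr>"

lemma pdc_trim_simps [simp]:
  "pQ (pdc_trim C) = pQ C" "pdelta (pdc_trim C) = pdelta C" "pq0 (pdc_trim C) = pq0 C" "pc (pdc_trim C) = pc C"
  by (simp_all add: pdc_trim_def)

lemma pd_behaviour_pdc_trim: "pd_behaviour (pdc_trim C) = pd_behaviour C"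
proof -
  have lstep: "lstep (pdc_trim C) = lstep C"
    by (rule ext) (simp add: lstep_def split: list.split)
  have istep: "istep (pdc_trim C) b = istep C b" for b
    by (rule ext) (auto simp: istep_def pdc_trim_def split: list.splits option.splits)
  have lclose: "lclose (pdc_trim C) k cfg = lclose C k cfg" for k cfg
    by (induction k arbitrary: cfg) (simp_all add: lstep split: option.split)
  have "runfrom (pdc_trim C) cfg w = runfrom C cfg w" for cfg w
    by (induction w arbitrary: cfg) (simp_all add: istep lclose split: option.split)
  then show ?thesis
    by (simp add: fun_eq_iff pd_behaviour_def pd_out_def pd_state_def pd_run_def lclose)
qed

definition trimmed_pdcs :: "pdc set" where
  "trimmed_pdcs = {C. finite (pQ C) \<and> (\<forall>q x a. q \<notin> pQ C \<longrightarrow> pdelta C q x a = None)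
      \<and> (\<forall>q x a. pdelta C q x a = None \<longrightarrow> pnu C q x a = [])}"

instance gamma :: countable
  by countable_datatype

definition pdc_code :: "pdc \<Rightarrow> nat list \<times> ((nat \<times> gamma list) option \<times> bool list) list \<times> nat \<times> nat" where
  "pdc_code C = (sorted_list_of_set (pQ C),
     map (\<lambda>(q, x, a). (pdelta C q x a, pnu C q x a))
       (List.product (sorted_list_of_set (pQ C)) (List.product [None, Some False, Some True] [G0, G1, Z0])),
     pq0 C, pc C)"

lemma inj_on_pdc_code: "inj_on pdc_code trimmed_pdcs"
proof (rule inj_onI)
  fix C C'
  assume C: "C \<in> trimmed_pdcs" and C': "C' \<in> trimmed_pdcs" and code: "pdc_code C = pdc_code C'"
  have "sorted_list_of_set (pQ C) = sorted_list_of_set (pQ C')"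
    using code by (simp add: pdc_code_def)
  moreover have "finite (pQ C)" "finite (pQ C')"
    using C C' by (simp_all add: trimmed_pdcs_def)
  ultimately have Q: "pQ C = pQ C'"
    by (metis set_sorted_list_of_set)
  define letters where "letters = List.product [None, Some False, Some True] [G0, G1, Z0]"
  have tables: "\<forall>(q, x, a) \<in> set (List.product (sorted_list_of_set (pQ C)) letters).
      (pdelta C q x a, pnu C q x a) = (pdelta C' q x a, pnu C' q x a)"
    using code unfolding pdc_code_def Q letters_def map_eq_conv by simp
  have "pdelta C q x a = pdelta C' q x a \<and> pnu C q x a = pnu C' q x a" for q x a
  proof (cases "q \<in> pQ C")
    case True
    have "(x, a) \<in> set letters"
      by (cases x; cases a) (auto simp: letters_def)
    then have "(q, x, a) \<in> set (List.product (sorted_list_of_set (pQ C)) letters)"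
      using True C by (simp add: trimmed_pdcs_def)
    then show ?thesis
      using tables by fast
  next
    case False
    then show ?thesis
      using C C' Q by (simp add: trimmed_pdcs_def)
  qed
  moreover have "pq0 C = pq0 C'" "pc C = pc C'"
    using code by (simp_all add: pdc_code_def)
  ultimately show "C = C'"
    using Q by (intro pdc.equality) (simp_all add: fun_eq_iff)
qed

definition ilpdc_behaviours :: "(bool list \<Rightarrow> bool list \<times> nat) set" where
  "ilpdc_behaviours = pd_behaviour ` {C. is_ILPDC C}"

lemma countable_ilpdc_behaviours: "countable ilpdc_behaviours"
proof -
  have "ilpdc_behaviours \<subseteq> pd_behaviour ` trimmed_pdcs"
  proof
    fix f
    assume "f \<in> ilpdc_behaviours"
    then obtain C where "is_pdc C" and f: "f = pd_behaviour C"
      by (auto simp: ilpdc_behaviours_def is_ILPDC_def)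
    then have "pdc_trim C \<in> trimmed_pdcs"
      by (simp add: trimmed_pdcs_def is_pdc_def pdc_trim_def)
    then show "f \<in> pd_behaviour ` trimmed_pdcs"
      using f pd_behaviour_pdc_trim by (metis image_eqI)
  qed
  moreover have "countable trimmed_pdcs"
    using inj_on_pdc_code by (rule countable_image_inj_on[OF countableI_type])
  ultimately show ?thesis
    using countable_subset by blast
qed

definition id_pdc :: pdc where
  "id_pdc = \<lparr>pQ = {0}, pdelta = (\<lambda>q x a. if q = 0 \<and> x \<noteq> None \<and> a = Z0 then Some (0, [Z0]) else None),
     pnu = (\<lambda>q x a. case x of Some b \<Rightarrow> [b] | None \<Rightarrow> []), pq0 = 0, pc = 0\<rparr>"

lemma id_pdc_simps:
  "pQ id_pdc = {0}" "pdelta id_pdc q x a = (if q = 0 \<and> x \<noteq> None \<and> a = Z0 then Some (0, [Z0]) else None)"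
  "pq0 id_pdc = 0" "pc id_pdc = 0"
  by (simp_all add: id_pdc_def)

lemma pd_run_id_pdc: "pd_run id_pdc w = Some ((0, [Z0]), w)"
proof -
  have "runfrom id_pdc (0, [Z0]) w = Some ((0, [Z0]), w)"
    by (induction w) (auto simp: istep_def id_pdc_def)
  then show ?thesis
    by (simp add: pd_run_def id_pdc_def)
qed

lemma pd_out_id_pdc [simp]: "pd_out id_pdc w = w"
  by (simp add: pd_out_def pd_run_id_pdc)

lemma is_ILUPDC_id_pdc: "is_ILUPDC id_pdc"
proof -
  have "is_pdc id_pdc"
    unfolding is_pdc_def by (auto simp: id_pdc_simps lstep_def pd_run_id_pdc split: list.splits)
  moreover have "inj (\<lambda>w. (pd_out id_pdc w, pd_state id_pdc w))"
    by (rule injI) simp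
  ultimately show ?thesis
    by (auto simp: is_ILUPDC_def is_ILPDC_def id_pdc_def)
qed

lemma PD_depth_ge_imp_compressor:
  assumes "PD_depth_ge S \<alpha>"
  shows "\<exists>C. is_ILPDC C \<and>
    (\<forall>\<^sub>F n in sequentially. real (length (pd_out C (prefix_of S n))) \<le> (1 - \<alpha>) * real n)"
proof -
  have "\<exists>C. is_ILPDC C \<and>
      (\<forall>\<^sub>F n in sequentially. \<alpha> * real n \<le> real n - real (length (pd_out C (prefix_of S n))))"
    using spec[OF assms[unfolded PD_depth_ge_def], of id_pdc] is_ILUPDC_id_pdc
    by (simp add: prefix_of_def)
  then show ?thesis
    by (auto elim!: eventually_mono simp: algebra_simps)
qed

lemma ilpdc_behaviour_props:
  assumes "f \<in> ilpdc_behaviours"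
  shows "inj f" and "finite (snd ` range f)"
proof -
  obtain C where C: "is_ILPDC C" and f: "f = pd_behaviour C"
    using assms by (auto simp: ilpdc_behaviours_def)
  then show "inj f"
    by (simp add: is_ILPDC_def pd_behaviour_def [abs_def])
  have "snd ` range f \<subseteq> pQ C"
    using C pd_state_in_states by (auto simp: f pd_behaviour_def is_ILPDC_def)
  moreover have "finite (pQ C)"
    using C by (simp add: is_ILPDC_def is_pdc_def)
  ultimately show "finite (snd ` range f)"
    by (rule finite_subset)
qed

definition ilpdc_enum :: "nat \<Rightarrow> bool list \<Rightarrow> bool list \<times> nat" where
  "ilpdc_enum = from_nat_into ilpdc_behaviours"

lemma ilpdc_enum_props: "inj (ilpdc_enum i)" "finite (snd ` range (ilpdc_enum i))"
proof -
  have "pd_behaviour id_pdc \<in> ilpdc_behaviours"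
    using is_ILUPDC_id_pdc by (auto simp: ilpdc_behaviours_def is_ILUPDC_def)
  then have "ilpdc_enum i \<in> ilpdc_behaviours"
    unfolding ilpdc_enum_def by (metis empty_iff from_nat_into)
  then show "inj (ilpdc_enum i)" "finite (snd ` range (ilpdc_enum i))"
    by (simp_all add: ilpdc_behaviour_props)
qed

lemma ilpdc_enum_surj:
  assumes "is_ILPDC C"
  obtains i where "ilpdc_enum i = pd_behaviour C"
  using assms from_nat_into_surj[OF countable_ilpdc_behaviours]
  unfolding ilpdc_enum_def ilpdc_behaviours_def by blast

section \<open>The sequence\<close>

definition fst_overhead :: "nat \<Rightarrow> nat" where
  "fst_overhead L = card (fst_maps L) * L * 2 ^ L"

definition block_cost :: "nat \<Rightarrow> nat" where
  "block_cost L = L * (fst_overhead L + 2) + 2"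

definition hard_block :: "nat \<Rightarrow> bool list" where
  "hard_block L = (SOME u. length u = fst_overhead L + block_cost L
      \<and> hard_word (fst_maps L) L (block_cost L) u)"

lemma hard_block:
  "length (hard_block L) = fst_overhead L + block_cost L"
  "hard_word (fst_maps L) L (block_cost L) (hard_block L)"
  using someI_ex[OF hard_word_exists[OF finite_fst_maps]]
  unfolding hard_block_def fst_overhead_def by blast+

lemma repeat_gap_arith:
  fixes \<alpha> p r B c L :: real
  assumes "0 \<le> \<alpha>" "1 \<le> \<alpha> * (L + 1)" "0 \<le> p" "0 \<le> B"
    and r: "r = 3 * p + 1" and c: "c = L * (B + 2) + 2"
  shows "2 * p + 1 + r + (1 - \<alpha>) * (p + r * (B + c)) \<le> r * c"
proof -
  have "r * (B + 2) * 1 \<le> r * (B + 2) * (\<alpha> * (L + 1))"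
    using assms by (intro mult_left_mono) auto
  also have "\<dots> = \<alpha> * (r * (B + c))"
    by (simp add: c algebra_simps)
  finally have "r * (B + 2) \<le> \<alpha> * (r * (B + c))"
    by simp
  moreover have "0 \<le> \<alpha> * p"
    using assms by simp
  ultimately show ?thesis
    by (simp add: r algebra_simps)
qed

lemma Dk_gap_hard_block:
  assumes "k \<le> L" "0 < L" "0 < \<alpha>" "1 \<le> \<alpha> * (real L + 1)"
    and x: "x = v @ concat (replicate (3 * length v + 1) (hard_block L))"
  shows "Dk (length (rep_desc (hard_block L))) x + ereal ((1 - \<alpha>) * real (length x)) \<le> Dk k x"
proof -
  define r where "r = 3 * length v + 1"
  define B where "B = fst_overhead L"
  define c where "c = block_cost L"
  have "length x = length v + r * (B + c)"
    by (simp add: x r_def B_def c_def length_concat sum_list_replicate hard_block(1))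
  moreover have "2 * real (length v) + 1 + real r + (1 - \<alpha>) * (real (length v) + real r * (real B + real c))
      \<le> real r * real c"
    by (rule repeat_gap_arith) (use assms in \<open>simp_all add: r_def c_def B_def block_cost_def algebra_simps\<close>)
  ultimately have gap: "real (2 * length v + 1 + r) + (1 - \<alpha>) * real (length x) \<le> real (r * c)"
    by simp
  have "Dk (length (rep_desc (hard_block L))) x + ereal ((1 - \<alpha>) * real (length x))
      \<le> ereal (real (2 * length v + 1 + r)) + ereal ((1 - \<alpha>) * real (length x))"
    using Dk_repeat_upper unfolding x r_def by (rule add_right_mono)
  also have "\<dots> \<le> ereal (real (r * c))"
    using gap by simp
  also have "\<dots> \<le> Dk k x"
    unfolding x r_def c_def using Dk_repeat_lower[OF hard_block(2) assms(1,2)] .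
  finally show ?thesis .
qed

definition diag_pad :: "nat \<Rightarrow> bool list \<Rightarrow> bool list" where
  "diag_pad s v = (SOME R. \<forall>i\<le>s. s * length (v @ R) < (s + 1) * length (fst (ilpdc_enum i (v @ R))))"

lemma diag_pad:
  assumes "i \<le> s"
  shows "s * length (v @ diag_pad s v) < (s + 1) * length (fst (ilpdc_enum i (v @ diag_pad s v)))"
proof -
  have "\<exists>R. \<forall>i\<le>s. s * length (v @ R) < (s + 1) * length (fst (ilpdc_enum i (v @ R)))"
    by (rule exists_long_outputs) (simp_all add: ilpdc_enum_props)
  then have "\<forall>i\<le>s. s * length (v @ diag_pad s v) < (s + 1) * length (fst (ilpdc_enum i (v @ diag_pad s v)))"
    unfolding diag_pad_def by (rule someI_ex)
  then show ?thesis
    using assms by simp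
qed

definition padded :: "nat \<Rightarrow> bool list \<Rightarrow> bool list" where
  "padded s v = v @ diag_pad s v"

text \<open>Through \<open>prod_decode\<close> every level \<open>L\<close> of hard block recurs at infinitely many stages.\<close>

fun stage :: "nat \<Rightarrow> bool list" where
  "stage 0 = []"
| "stage (Suc s) = padded s (stage s)
     @ concat (replicate (3 * length (padded s (stage s)) + 1) (hard_block (fst (prod_decode s))))"

definition deep_seq :: "nat \<Rightarrow> bool" where
  "deep_seq i = stage (Suc i) ! i"

lemma prefix_nth: "prefix xs ys \<Longrightarrow> i < length xs \<Longrightarrow> xs ! i = ys ! i"
  by (auto simp: prefix_def nth_append)

lemma prefix_of_chain_limit:
  assumes chain: "\<And>s. prefix (W s) (W (Suc s))" and long: "\<And>s. s \<le> length (W s)"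
    and w: "prefix w (W t)"
  shows "prefix_of (\<lambda>i. W (Suc i) ! i) (length w) = w"
proof (rule nth_equalityI)
  have mono: "prefix (W a) (W b)" if "a \<le> b" for a b
    using that
  proof (induction b)
    case (Suc b)
    then show ?case
      using chain prefix_order.trans by (cases "a = Suc b") auto
  qed simp
  fix i
  assume "i < length (prefix_of (\<lambda>i. W (Suc i) ! i) (length w))"
  then have i: "i < length w"
    by (simp add: prefix_of_def)
  have "W (Suc i) ! i = W (max (Suc i) t) ! i"
    using mono[of "Suc i" "max (Suc i) t"] long[of "Suc i"] by (simp add: prefix_nth)
  also have "\<dots> = W t ! i"
    using mono[of t "max (Suc i) t"] i prefix_length_le[OF w] by (simp add: prefix_nth)
  also have "\<dots> = w ! i"
    using w i by (simp add: prefix_nth)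
  finally show "prefix_of (\<lambda>i. W (Suc i) ! i) (length w) ! i = w ! i"
    using i by (simp add: prefix_of_def)
qed (simp add: prefix_of_def)

lemma stage_long: "s \<le> length (stage s)"
proof (induction s)
  case (Suc s)
  then show ?case
    by (simp add: padded_def hard_block(1) block_cost_def)
qed simp

lemma prefix_of_deep_seq:
  assumes "prefix w (stage t)"
  shows "prefix_of deep_seq (length w) = w"
  unfolding deep_seq_def using assms stage_long
  by (intro prefix_of_chain_limit[of stage]) (auto simp: padded_def)

lemma deep_seq_level_prefixes:
  "\<exists>n\<ge>N. \<exists>v. prefix_of deep_seq n = v @ concat (replicate (3 * length v + 1) (hard_block L))"
proof -
  define s where "s = prod_encode (L, N)"
  define v where "v = padded s (stage s)"
  have "prefix_of deep_seq (length (stage (Suc s))) = stage (Suc s)"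
    by (rule prefix_of_deep_seq[of _ "Suc s"]) simp
  moreover have "stage (Suc s) = v @ concat (replicate (3 * length v + 1) (hard_block L))"
    by (simp add: v_def s_def)
  moreover have "N \<le> length (stage (Suc s))"
    using le_prod_encode_2[of N L] stage_long[of "Suc s"] unfolding s_def by linarith
  ultimately show ?thesis
    by metis
qed

lemma one_le_mult_of_ceiling_inverse:
  fixes \<alpha> :: real
  assumes "0 < \<alpha>" and "nat \<lceil>1 / \<alpha>\<rceil> \<le> n"
  shows "1 \<le> \<alpha> * real n"
proof -
  have "1 / \<alpha> \<le> real n"
    using assms(2) by linarith
  then show ?thesis
    using assms(1) by (simp add: field_simps)
qed

lemma FS_depth_ge_deep_seq:
  assumes "0 < \<alpha>"
  shows "FS_depth_ge deep_seq (1 - \<alpha>)"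
  unfolding FS_depth_ge_def
proof
  fix k
  define L where "L = max k (nat \<lceil>1 / \<alpha>\<rceil>) + 1"
  define k' where "k' = length (rep_desc (hard_block L))"
  have "nat \<lceil>1 / \<alpha>\<rceil> \<le> L + 1"
    using max.cobounded2[of "nat \<lceil>1 / \<alpha>\<rceil>" k] unfolding L_def by linarith
  then have "1 \<le> \<alpha> * real (L + 1)"
    by (rule one_le_mult_of_ceiling_inverse[OF assms])
  then have L: "k \<le> L" "0 < L" "1 \<le> \<alpha> * (real L + 1)"
    by (simp_all add: L_def)
  have "\<exists>n\<ge>N. Dk k' (prefix_of deep_seq n) + ereal ((1 - \<alpha>) * real n) \<le> Dk k (prefix_of deep_seq n)" for N
  proof -
    obtain n v where "N \<le> n"
      and x: "prefix_of deep_seq n = v @ concat (replicate (3 * length v + 1) (hard_block L))"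
      using deep_seq_level_prefixes by blast
    moreover have "length (prefix_of deep_seq n) = n"
      by (simp add: prefix_of_def)
    ultimately show ?thesis
      using Dk_gap_hard_block[OF L(1,2) assms L(3) x] unfolding k'_def by auto
  qed
  then have "\<exists>\<^sub>\<infinity>n. Dk k' (prefix_of deep_seq n) + ereal ((1 - \<alpha>) * real n) \<le> Dk k (prefix_of deep_seq n)"
    unfolding INFM_nat_le by (rule allI)
  then show "\<exists>k'. \<exists>\<^sub>\<infinity>n. Dk k' (prefix_of deep_seq n) + ereal ((1 - \<alpha>) * real n) \<le> Dk k (prefix_of deep_seq n)"
    by (rule exI)
qed

lemma deep_seq_escapes_ilpdc:
  assumes "is_ILPDC C"
  obtains i where "\<And>s. i \<le> s \<Longrightarrow> \<exists>n\<ge>s. s * n < (s + 1) * length (pd_out C (prefix_of deep_seq n))"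
proof -
  obtain i where i: "ilpdc_enum i = pd_behaviour C"
    using ilpdc_enum_surj[OF assms] .
  have "\<exists>n\<ge>s. s * n < (s + 1) * length (pd_out C (prefix_of deep_seq n))" if "i \<le> s" for s
  proof -
    define w where "w = padded s (stage s)"
    have "prefix_of deep_seq (length w) = w"
      by (rule prefix_of_deep_seq[of _ "Suc s"]) (simp add: w_def)
    moreover have "s \<le> length w"
      using stage_long[of s] by (simp add: w_def padded_def)
    moreover have "s * length w < (s + 1) * length (pd_out C w)"
      using diag_pad[OF that, of "stage s"] i by (simp add: w_def padded_def pd_behaviour_def)
    ultimately show ?thesis
      by auto
  qed
  then show ?thesis
    by (rule that)
qed

lemma not_PD_depth_ge_deep_seq:
  assumes "0 < \<alpha>"
  shows "\<not> PD_depth_ge deep_seq \<alpha>"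
proof
  assume "PD_depth_ge deep_seq \<alpha>"
  then obtain C where C: "is_ILPDC C" and "\<forall>\<^sub>F n in sequentially.
      real (length (pd_out C (prefix_of deep_seq n))) \<le> (1 - \<alpha>) * real n"
    using PD_depth_ge_imp_compressor by blast
  then obtain N where small: "\<And>n. N \<le> n \<Longrightarrow>
      real (length (pd_out C (prefix_of deep_seq n))) \<le> (1 - \<alpha>) * real n"
    unfolding eventually_sequentially by blast
  obtain i where escape: "\<And>s. i \<le> s \<Longrightarrow> \<exists>n\<ge>s. s * n < (s + 1) * length (pd_out C (prefix_of deep_seq n))"
    using deep_seq_escapes_ilpdc[OF C] by blast
  define s where "s = max i (max N (nat \<lceil>1 / \<alpha>\<rceil>))"
  obtain n where "s \<le> n" and big: "s * n < (s + 1) * length (pd_out C (prefix_of deep_seq n))"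
    using escape[of s] by (auto simp: s_def)
  have "nat \<lceil>1 / \<alpha>\<rceil> \<le> s + 1"
    using max.cobounded2[of "nat \<lceil>1 / \<alpha>\<rceil>" N] max.cobounded2[of "max N (nat \<lceil>1 / \<alpha>\<rceil>)" i]
    unfolding s_def by linarith
  then have "1 \<le> \<alpha> * real (s + 1)"
    by (rule one_le_mult_of_ceiling_inverse[OF assms])
  have "real (s * n) < real ((s + 1) * length (pd_out C (prefix_of deep_seq n)))"
    using big by (simp only: of_nat_less_iff)
  then have "real s * real n < (real s + 1) * real (length (pd_out C (prefix_of deep_seq n)))"
    by (simp add: distrib_right)
  also have "\<dots> \<le> (real s + 1) * ((1 - \<alpha>) * real n)"
    using small[of n] \<open>s \<le> n\<close> by (intro mult_left_mono) (auto simp: s_def)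
  also have "\<dots> = real s * real n + (1 - \<alpha> * real (s + 1)) * real n"
    by (simp add: algebra_simps)
  also have "\<dots> \<le> real s * real n"
    using \<open>1 \<le> \<alpha> * real (s + 1)\<close> by (simp add: mult_nonpos_nonneg)
  finally show False
    by simp
qed

theorem mainTheorem4:
  shows "\<exists>S :: nat \<Rightarrow> bool. \<forall>\<alpha> :: real. 0 < \<alpha> \<and> \<alpha> < 1 \<longrightarrow>
           FS_depth_ge S (1 - \<alpha>) \<and> \<not> PD_depth_ge S \<alpha>"
  using FS_depth_ge_deep_seq not_PD_depth_ge_deep_seq by blast

end
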